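(* Let $Y$ be a (closed) hyperplane in $c_0$. Then $Y$ has property-$(HB)$ in $c_0$ if and only if $Y$ is an $M$-summand in $c_0$.
   Context: $c_0$ is the space of real null sequences with the sup norm; $c_0^*=\ell_1$. For a closed subspace $Y$ of $X$, $Y^\perp=\{x^*\in X^*:x^*|_Y=0\}$. $Y$ has property-$(HB)$ in $X$ if there is a linear projection $P$ on $X^*$ with range $Y^\perp$ and $\|P\|=1$ such that, writing $G=(I-P)(X^* )$, for every $x^*=y^\#+y^\perp$ with $y^\#\in G$, $0\ne y^\perp\in Y^\perp$, one has $\|x^*\|>\|y^\#\|$ and $\|x^*\|\ge\|y^\perp\|$. $Y$ is an $M$-summand in $X$ if there is a closed subspace $W$ with $X=Y\oplus W$ and $\|y+w\|=\max\{\|y\|,\|w\|\}$ for all $y\in Y,w\in W$. *)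

theory Defs
  imports "HOL-Analysis.Analysis"
begin

text \<open>The Banach space c_0 is realised as the closed subspace of null sequences inside the
Banach space of bounded (automatically continuous) functions nat to real with the sup norm.\<close>

definition c0 :: "(nat \<Rightarrow>\<^sub>C real) set" where
  "c0 = {x. (apply_bcontfun x \<longlonglongrightarrow> 0)}"

text \<open>The dual of c_0 is identified with l_1 (as in the context): a sequence a with
summable absolute values acts on x in c_0 by the pairing sum a_n x_n.\<close>

definition l1 :: "(nat \<Rightarrow> real) set" where
  "l1 = {a. summable (\<lambda>n. \<bar>a n\<bar>)}"

definition norm1 :: "(nat \<Rightarrow> real) \<Rightarrow> real" where
  "norm1 a = (\<Sum>n. \<bar>a n\<bar>)"

definition pairing :: "(nat \<Rightarrow> real) \<Rightarrow> (nat \<Rightarrow>\<^sub>C real) \<Rightarrow> real" where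
  "pairing a x = (\<Sum>n. a n * apply_bcontfun x n)"

definition annihilator :: "(nat \<Rightarrow>\<^sub>C real) set \<Rightarrow> (nat \<Rightarrow> real) set" where
  "annihilator Y = {a \<in> l1. \<forall>y\<in>Y. pairing a y = 0}"

definition hyperplane_c0 :: "(nat \<Rightarrow>\<^sub>C real) set \<Rightarrow> bool" where
  "hyperplane_c0 Y \<longleftrightarrow> Y \<subseteq> c0 \<and> subspace Y \<and> closed Y \<and> Y \<noteq> c0 \<and>
     (\<exists>x0\<in>c0. \<forall>x\<in>c0. \<exists>y\<in>Y. \<exists>t::real. x = y + t *\<^sub>R x0)"

definition norm_one_projection_onto :: "((nat \<Rightarrow> real) \<Rightarrow> (nat \<Rightarrow> real)) \<Rightarrow> (nat \<Rightarrow> real) set \<Rightarrow> bool" where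
  "norm_one_projection_onto P R \<longleftrightarrow>
     (\<forall>a\<in>l1. \<forall>b\<in>l1. P (\<lambda>n. a n + b n) = (\<lambda>n. P a n + P b n)) \<and>
     (\<forall>a\<in>l1. \<forall>c::real. P (\<lambda>n. c * a n) = (\<lambda>n. c * P a n)) \<and>
     (\<forall>a\<in>l1. P (P a) = P a) \<and>
     P ` l1 = R \<and>
     bdd_above ((\<lambda>a. norm1 (P a)) ` {a \<in> l1. norm1 a \<le> 1}) \<and>
     Sup ((\<lambda>a. norm1 (P a)) ` {a \<in> l1. norm1 a \<le> 1}) = 1"

definition property_HB_c0 :: "(nat \<Rightarrow>\<^sub>C real) set \<Rightarrow> bool" where
  "property_HB_c0 Y \<longleftrightarrow>
     (\<exists>P. norm_one_projection_onto P (annihilator Y) \<and>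
        (let G = (\<lambda>a. (\<lambda>n. a n - P a n)) ` l1 in
          \<forall>g\<in>G. \<forall>z\<in>annihilator Y. z \<noteq> (\<lambda>n. 0) \<longrightarrow>
             norm1 (\<lambda>n. g n + z n) > norm1 g \<and> norm1 (\<lambda>n. g n + z n) \<ge> norm1 z))"

definition M_summand_c0 :: "(nat \<Rightarrow>\<^sub>C real) set \<Rightarrow> bool" where
  "M_summand_c0 Y \<longleftrightarrow>
     (\<exists>W. W \<subseteq> c0 \<and> subspace W \<and> closed W \<and> Y \<inter> W = {0} \<and>
        {y + w | y w. y \<in> Y \<and> w \<in> W} = c0 \<and>
        (\<forall>y\<in>Y. \<forall>w\<in>W. norm (y + w) = max (norm y) (norm w)))"

end

theory Submission
  imports Defs
begin

text \<open>
  A closed hyperplane \<open>Y\<close> of c_0 is the kernel of some nonzero \<open>a\<close> in l_1: the coefficient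
  along a vector \<open>x\<^sub>0 \<notin> Y\<close> is a functional bounded by \<open>1 / dist(x\<^sub>0, Y)\<close>, and a bounded
  functional on c_0 is the pairing with its values on the unit vectors, because finite
  sections converge in c_0.

  If \<open>a\<close> is supported at a single coordinate \<open>k\<close>, then \<open>Y = {x. x\<^sub>k = 0}\<close>; the span of \<open>e\<^sub>k\<close>
  is an M-complement, and \<open>b \<mapsto> b\<^sub>k e\<^sub>k\<close> is a norm-one projection of l_1 onto the
  annihilator with the required strict inequality.

  If \<open>a\<close> has two nonzero coordinates, both properties fail. An M-complement of \<open>Y\<close> is spanned
  by some \<open>w\<close> with \<open>\<langle>a, w\<rangle> = 1\<close> and \<open>|\<langle>a, x\<rangle>| \<parallel>w\<parallel> \<le> \<parallel>x\<parallel>\<close>, which forces \<open>\<parallel>a\<parallel>\<^sub>1 \<parallel>w\<parallel> = 1\<close>;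
  so \<open>w\<close> norms \<open>a\<close>, \<open>w\<^sub>k = sgn(a\<^sub>k) \<parallel>w\<parallel>\<close>, and decomposing \<open>sgn(a\<^sub>k) e\<^sub>k\<close> yields two components
  of norm less than 1. For a norm-one projection \<open>P\<close> onto the span of \<open>a\<close>, take a coordinate
  \<open>i\<close> carrying at most half of \<open>\<parallel>a\<parallel>\<^sub>1\<close> and \<open>b = a\<^sub>i e\<^sub>i\<close>: then \<open>P b = t a\<close> with \<open>t \<noteq> 0\<close>,
  and \<open>g = b - P b\<close>, \<open>z = P b\<close> violate \<open>\<parallel>g + z\<parallel> > \<parallel>g\<parallel>\<close> since \<open>\<parallel>b - t a\<parallel>\<^sub>1 \<ge> |a\<^sub>i| = \<parallel>b\<parallel>\<^sub>1\<close>.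
\<close>

section \<open>Sequences in c_0 and l_1\<close>

lemma apply_Bcontfun_nat:
  fixes f :: "nat \<Rightarrow> real"
  assumes "\<And>n. \<bar>f n\<bar> \<le> B"
  shows "apply_bcontfun (Bcontfun f) = f"
  by (rule Bcontfun_inverse, rule bcontfun_normI[of _ B]) (auto simp: assms)

definition finite_section :: "nat \<Rightarrow> (nat \<Rightarrow> real) \<Rightarrow> (nat \<Rightarrow>\<^sub>C real)" where
  "finite_section N f = Bcontfun (\<lambda>n. if n < N then f n else 0)"

definition unit_seq :: "nat \<Rightarrow> (nat \<Rightarrow>\<^sub>C real)" where
  "unit_seq k = Bcontfun (\<lambda>n. if n = k then 1 else 0)"

lemma finite_section_apply [simp]:
  "apply_bcontfun (finite_section N f) n = (if n < N then f n else 0)"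
proof -
  have "\<bar>if m < N then f m else 0\<bar> \<le> (\<Sum>k<N. \<bar>f k\<bar>)" for m
    by (cases "m < N") (auto intro: member_le_sum simp: sum_nonneg)
  then show ?thesis
    unfolding finite_section_def by (subst apply_Bcontfun_nat[of _ "\<Sum>k<N. \<bar>f k\<bar>"]) auto
qed

lemma unit_seq_apply [simp]: "apply_bcontfun (unit_seq k) n = (if n = k then 1 else 0)"
  unfolding unit_seq_def by (subst apply_Bcontfun_nat[of _ 1]) auto

lemma finite_section_Suc: "finite_section (Suc N) f = finite_section N f + f N *\<^sub>R unit_seq N"
  by (rule bcontfun_eqI) (auto simp: less_Suc_eq)

lemma abs_apply_le_norm: "\<bar>apply_bcontfun x n\<bar> \<le> norm (x :: nat \<Rightarrow>\<^sub>C real)"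
  using norm_bounded[of x n] by simp

lemma norm_le_of_abs_apply_le: "(\<And>n. \<bar>apply_bcontfun x n\<bar> \<le> B) \<Longrightarrow> norm (x :: nat \<Rightarrow>\<^sub>C real) \<le> B"
  by (rule norm_bound) simp

lemma norm_eq_max_of_pointwise:
  fixes x y z :: "nat \<Rightarrow>\<^sub>C real"
  assumes "\<And>n. \<bar>apply_bcontfun z n\<bar> = max \<bar>apply_bcontfun x n\<bar> \<bar>apply_bcontfun y n\<bar>"
  shows "norm z = max (norm x) (norm y)"
proof (rule antisym)
  show "norm z \<le> max (norm x) (norm y)"
  proof (rule norm_le_of_abs_apply_le)
    fix n
    show "\<bar>apply_bcontfun z n\<bar> \<le> max (norm x) (norm y)"
      unfolding assms using abs_apply_le_norm[of x n] abs_apply_le_norm[of y n] by linarith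
  qed
  have "\<bar>apply_bcontfun x n\<bar> \<le> norm z" "\<bar>apply_bcontfun y n\<bar> \<le> norm z" for n
    using assms[of n] abs_apply_le_norm[of z n] by linarith+
  then show "max (norm x) (norm y) \<le> norm z"
    by (simp add: norm_le_of_abs_apply_le)
qed

lemma norm_finite_section_sgn: "norm (finite_section N (\<lambda>n. sgn (a n))) \<le> 1"
  by (rule norm_le_of_abs_apply_le) (simp add: abs_sgn_eq)

lemma subspace_c0: "subspace c0"
  unfolding subspace_def c0_def
  by (auto intro: tendsto_add[where a = 0 and b = 0, simplified] tendsto_mult_right_zero)

lemma c0_of_eventually_zero: "(\<And>n. n \<ge> N \<Longrightarrow> apply_bcontfun x n = 0) \<Longrightarrow> x \<in> c0"
  unfolding c0_def mem_Collect_eq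
  by (rule tendsto_eventually) (auto simp: eventually_sequentially)

lemma finite_section_c0: "finite_section N f \<in> c0"
  by (rule c0_of_eventually_zero[of N]) simp

lemma unit_seq_c0: "unit_seq k \<in> c0"
  by (rule c0_of_eventually_zero[of "Suc k"]) simp

lemma finite_section_tendsto:
  assumes "x \<in> c0"
  shows "(\<lambda>N. finite_section N (apply_bcontfun x)) \<longlonglongrightarrow> x"
proof (rule metric_LIMSEQ_I)
  fix e :: real assume "e > 0"
  from assms have "apply_bcontfun x \<longlonglongrightarrow> 0" unfolding c0_def by simp
  then obtain N where N: "\<And>n. n \<ge> N \<Longrightarrow> \<bar>apply_bcontfun x n\<bar> < e / 2"
    using LIMSEQ_D[of "apply_bcontfun x" 0 "e / 2"] \<open>e > 0\<close> by force
  have le: "dist (finite_section M (apply_bcontfun x)) x \<le> e / 2" if "M \<ge> N" for M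
    unfolding dist_norm
  proof (rule norm_le_of_abs_apply_le)
    fix n
    show "\<bar>apply_bcontfun (finite_section M (apply_bcontfun x) - x) n\<bar> \<le> e / 2"
      using N[of n] that \<open>e > 0\<close> by (cases "n < M") auto
  qed
  show "\<exists>N. \<forall>M\<ge>N. dist (finite_section M (apply_bcontfun x)) x < e"
  proof (intro exI allI impI)
    fix M assume "N \<le> M"
    then show "dist (finite_section M (apply_bcontfun x)) x < e"
      using le[of M] \<open>e > 0\<close> by linarith
  qed
qed

lemma l1_summable: "a \<in> l1 \<Longrightarrow> summable (\<lambda>n. \<bar>a n\<bar>)"
  by (simp add: l1_def)

lemma summable_abs_mult_apply: "a \<in> l1 \<Longrightarrow> summable (\<lambda>n. \<bar>a n * apply_bcontfun x n\<bar>)"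
  by (rule summable_comparison_test[where g = "\<lambda>n. \<bar>a n\<bar> * norm x"])
    (auto simp: abs_mult intro!: mult_left_mono abs_apply_le_norm summable_mult2 l1_summable)

lemma summable_mult_apply: "a \<in> l1 \<Longrightarrow> summable (\<lambda>n. a n * apply_bcontfun x n)"
  by (rule summable_rabs_cancel[OF summable_abs_mult_apply])

lemma linear_pairing: "a \<in> l1 \<Longrightarrow> linear (pairing a)"
  unfolding pairing_def
  by (rule linearI)
    (simp_all add: distrib_left suminf_add summable_mult_apply suminf_mult mult.left_commute)

lemma pairing_finite_support:
  "(\<And>n. n \<ge> N \<Longrightarrow> apply_bcontfun x n = 0) \<Longrightarrow> pairing a x = (\<Sum>n<N. a n * apply_bcontfun x n)"
  unfolding pairing_def by (rule suminf_finite) auto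

lemma pairing_single_support:
  assumes "\<And>n. n \<noteq> k \<Longrightarrow> a n = 0"
  shows "pairing a x = a k * apply_bcontfun x k"
proof -
  have "(\<lambda>n. a n * apply_bcontfun x n) = (\<lambda>n. if n = k then a k * apply_bcontfun x k else 0)"
    using assms by auto
  then show ?thesis
    unfolding pairing_def using sums_single[of k "\<lambda>_. a k * apply_bcontfun x k"] sums_unique by metis
qed

lemma pairing_unit_seq [simp]: "pairing a (unit_seq k) = a k"
  using pairing_finite_support[of "Suc k" "unit_seq k" a] by simp

lemma norm1_nonneg: "a \<in> l1 \<Longrightarrow> 0 \<le> norm1 a"
  unfolding norm1_def by (rule suminf_nonneg) (auto simp: l1_def)

lemma abs_pairing_le: "a \<in> l1 \<Longrightarrow> \<bar>pairing a x\<bar> \<le> norm1 a * norm x"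
proof -
  assume a: "a \<in> l1"
  have "\<bar>pairing a x\<bar> \<le> (\<Sum>n. \<bar>a n * apply_bcontfun x n\<bar>)"
    unfolding pairing_def by (rule summable_rabs[OF summable_abs_mult_apply[OF a]])
  also have "\<dots> \<le> (\<Sum>n. \<bar>a n\<bar> * norm x)"
    using summable_abs_mult_apply[OF a]
    by (intro suminf_le) (auto simp: abs_mult intro!: mult_left_mono abs_apply_le_norm summable_mult2 l1_summable a)
  also have "\<dots> = norm1 a * norm x"
    unfolding norm1_def by (rule suminf_mult2[symmetric]) (rule l1_summable[OF a])
  finally show ?thesis .
qed

lemma pairing_eq_norm1_mult_norm_imp:
  assumes a: "a \<in> l1" and eq: "pairing a x = norm1 a * norm x"
  shows "a n * apply_bcontfun x n = \<bar>a n\<bar> * norm x"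
proof -
  define f where "f n = \<bar>a n\<bar> * norm x - a n * apply_bcontfun x n" for n
  have f_nonneg: "0 \<le> f n" for n
  proof -
    have "a n * apply_bcontfun x n \<le> \<bar>a n\<bar> * \<bar>apply_bcontfun x n\<bar>"
      by (simp add: abs_mult[symmetric])
    also have "\<dots> \<le> \<bar>a n\<bar> * norm x"
      by (intro mult_left_mono abs_apply_le_norm) simp
    finally show ?thesis unfolding f_def by simp
  qed
  have "f sums (norm1 a * norm x - pairing a x)"
    unfolding f_def norm1_def pairing_def
    by (intro sums_diff sums_mult2 summable_sums l1_summable[OF a] summable_mult_apply[OF a])
  then have "f sums 0" using eq by simp
  then have "f n = 0"
    using f_nonneg sums_zero_iff_shift suminf_eq_zero_iff sums_summable sums_unique by metis
  then show ?thesis unfolding f_def by simp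
qed

lemma l1_scale: "a \<in> l1 \<Longrightarrow> (\<lambda>n. c * a n) \<in> l1"
  unfolding l1_def by (simp add: abs_mult summable_mult)

lemma norm1_scale: "a \<in> l1 \<Longrightarrow> norm1 (\<lambda>n. c * a n) = \<bar>c\<bar> * norm1 a"
  unfolding norm1_def l1_def by (simp add: abs_mult suminf_mult)

lemma l1_diff: "a \<in> l1 \<Longrightarrow> b \<in> l1 \<Longrightarrow> (\<lambda>n. a n - b n) \<in> l1"
  unfolding l1_def mem_Collect_eq
  by (rule summable_comparison_test[where g = "\<lambda>n. \<bar>a n\<bar> + \<bar>b n\<bar>"]) (auto intro!: summable_add)

lemma l1_upd: "a \<in> l1 \<Longrightarrow> a(k := v) \<in> l1"
  unfolding l1_def mem_Collect_eq
  by (rule summable_comparison_test[where g = "\<lambda>n. \<bar>a n\<bar> + (if n = k then \<bar>v\<bar> else 0)"])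
    (auto intro!: summable_add summable_single)

lemma norm1_upd: "a \<in> l1 \<Longrightarrow> norm1 (a(k := v)) = norm1 a - \<bar>a k\<bar> + \<bar>v\<bar>"
proof -
  assume a: "a \<in> l1"
  have "(\<lambda>n. \<bar>(a(k := v)) n\<bar>) = (\<lambda>n. \<bar>a n\<bar> + (if n = k then \<bar>v\<bar> - \<bar>a k\<bar> else 0))"
    by auto
  moreover have "(\<lambda>n. \<bar>a n\<bar> + (if n = k then \<bar>v\<bar> - \<bar>a k\<bar> else 0)) sums (norm1 a + (\<bar>v\<bar> - \<bar>a k\<bar>))"
    unfolding norm1_def by (intro sums_add summable_sums l1_summable[OF a] sums_single)
  ultimately show ?thesis unfolding norm1_def by (simp add: sums_iff)
qed

lemma l1_single: "(\<lambda>_. 0)(k := v) \<in> l1"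
  by (rule l1_upd) (simp add: l1_def)

lemma norm1_single: "norm1 ((\<lambda>_. 0)(k := v)) = \<bar>v\<bar>"
  by (subst norm1_upd) (auto simp: l1_def norm1_def)

lemma abs_le_norm1: "a \<in> l1 \<Longrightarrow> \<bar>a k\<bar> \<le> norm1 a"
  using norm1_upd[of a k 0] norm1_nonneg[OF l1_upd[of a k 0]] by simp

lemma abs_add_abs_le_norm1:
  assumes "a \<in> l1" and "j \<noteq> k"
  shows "\<bar>a j\<bar> + \<bar>a k\<bar> \<le> norm1 a"
proof -
  have "(\<Sum>n\<in>{j, k}. \<bar>a n\<bar>) \<le> (\<Sum>n. \<bar>a n\<bar>)"
    by (rule sum_le_suminf) (auto intro: l1_summable[OF assms(1)])
  then show ?thesis using assms(2) unfolding norm1_def by simp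
qed

section \<open>Bounded functionals on c_0\<close>

locale bounded_c0_functional =
  fixes \<phi> :: "(nat \<Rightarrow>\<^sub>C real) \<Rightarrow> real" and C :: real
  assumes add: "x \<in> c0 \<Longrightarrow> y \<in> c0 \<Longrightarrow> \<phi> (x + y) = \<phi> x + \<phi> y"
    and scale: "x \<in> c0 \<Longrightarrow> \<phi> (c *\<^sub>R x) = c * \<phi> x"
    and bound: "x \<in> c0 \<Longrightarrow> \<bar>\<phi> x\<bar> \<le> C * norm x"
begin

definition coeffs :: "nat \<Rightarrow> real" where
  "coeffs n = \<phi> (unit_seq n)"

lemma diff: "x \<in> c0 \<Longrightarrow> y \<in> c0 \<Longrightarrow> \<phi> (x - y) = \<phi> x - \<phi> y"
  using add[of x "(-1) *\<^sub>R y"] scale[of y "-1"] subspace_c0 by (simp add: subspace_neg)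

lemma C_nonneg: "0 \<le> C"
proof -
  have "0 \<le> C * norm (unit_seq 0)" using bound[OF unit_seq_c0, of 0] by linarith
  moreover have "1 \<le> norm (unit_seq 0)" using abs_apply_le_norm[of "unit_seq 0" 0] by simp
  ultimately show ?thesis using zero_le_mult_iff[of C "norm (unit_seq 0)"] by linarith
qed

lemma finite_section_eq_sum: "\<phi> (finite_section N f) = (\<Sum>n<N. f n * coeffs n)"
proof (induction N)
  case 0
  have "finite_section 0 f = 0 *\<^sub>R finite_section 0 f" by (simp add: bcontfun_eqI)
  then show ?case using scale[OF finite_section_c0, of 0] by simp
next
  case (Suc N)
  then show ?case
    unfolding finite_section_Suc coeffs_def
    by (simp add: add scale finite_section_c0 unit_seq_c0 subspace_scale[OF subspace_c0])
qed

lemma coeffs_l1: "coeffs \<in> l1"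
  and norm1_coeffs_le: "norm1 coeffs \<le> C"
proof -
  have partial_sums: "(\<Sum>n<N. \<bar>coeffs n\<bar>) \<le> C" for N
  proof -
    have "(\<Sum>n<N. \<bar>coeffs n\<bar>) = \<phi> (finite_section N (\<lambda>n. sgn (coeffs n)))"
      by (auto simp: finite_section_eq_sum sgn_real_def intro!: sum.cong)
    also have "\<dots> \<le> C * norm (finite_section N (\<lambda>n. sgn (coeffs n)))"
      using bound[OF finite_section_c0] by (rule abs_le_D1)
    also have "\<dots> \<le> C"
      using norm_finite_section_sgn C_nonneg by (simp add: mult_left_le)
    finally show ?thesis .
  qed
  then show "coeffs \<in> l1"
    unfolding l1_def mem_Collect_eq using partial_sums[of "Suc _"]
    by (intro bounded_imp_summable[of _ C]) (auto simp: lessThan_Suc_atMost)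
  then show "norm1 coeffs \<le> C"
    unfolding norm1_def using partial_sums by (intro suminf_le_const l1_summable)
qed

lemma eq_pairing:
  assumes "x \<in> c0"
  shows "\<phi> x = pairing coeffs x"
proof (rule LIMSEQ_unique)
  let ?s = "\<lambda>N. finite_section N (apply_bcontfun x)"
  have "(\<lambda>N. \<phi> (?s N) - \<phi> x) \<longlonglongrightarrow> 0"
  proof (rule Lim_null_comparison)
    show "\<forall>\<^sub>F N in sequentially. norm (\<phi> (?s N) - \<phi> x) \<le> C * norm (?s N - x)"
      using bound[of "?s N - x" for N] assms
      by (simp add: diff finite_section_c0 subspace_diff[OF subspace_c0])
    show "(\<lambda>N. C * norm (?s N - x)) \<longlonglongrightarrow> 0"
      by (intro tendsto_mult_right_zero tendsto_norm_zero LIM_zero finite_section_tendsto assms)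
  qed
  then show "(\<lambda>N. \<phi> (?s N)) \<longlonglongrightarrow> \<phi> x"
    by (simp add: LIM_zero_iff)
  have "(\<lambda>N. \<Sum>n<N. coeffs n * apply_bcontfun x n) \<longlonglongrightarrow> pairing coeffs x"
    unfolding pairing_def by (rule summable_LIMSEQ) (rule summable_mult_apply[OF coeffs_l1])
  then show "(\<lambda>N. \<phi> (?s N)) \<longlonglongrightarrow> pairing coeffs x"
    by (simp add: finite_section_eq_sum mult.commute)
qed

end

section \<open>Closed hyperplanes are kernels\<close>

lemma subspace_coordinate_functional:
  fixes Y :: "'a::real_vector set"
  assumes "subspace Y" and "x0 \<notin> Y"
  obtains \<phi> where "\<And>y t. y \<in> Y \<Longrightarrow> \<phi> (y + t *\<^sub>R x0) = t"
proof
  fix y t assume "y \<in> Y"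
  have "y + t *\<^sub>R x0 - s *\<^sub>R x0 \<in> Y \<longleftrightarrow> s = t" for s
  proof
    assume "y + t *\<^sub>R x0 - s *\<^sub>R x0 \<in> Y"
    then have "(y + t *\<^sub>R x0 - s *\<^sub>R x0) - y \<in> Y"
      using subspace_diff[OF assms(1) _ \<open>y \<in> Y\<close>] by blast
    then have "(t - s) *\<^sub>R x0 \<in> Y" by (simp add: algebra_simps)
    then show "s = t"
      using assms subspace_scale[of Y "(t - s) *\<^sub>R x0" "inverse (t - s)"] by (cases "s = t") auto
  qed (simp add: \<open>y \<in> Y\<close>)
  then show "(THE s. y + t *\<^sub>R x0 - s *\<^sub>R x0 \<in> Y) = t"
    by simp
qed

lemma abs_mult_infdist_le_norm:
  fixes Y :: "'a::real_normed_vector set"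
  assumes "subspace Y" and "y \<in> Y"
  shows "\<bar>t\<bar> * infdist x0 Y \<le> norm (y + t *\<^sub>R x0)"
proof (cases "t = 0")
  case False
  have "- (1 / t) *\<^sub>R y \<in> Y" using assms by (rule subspace_scale)
  then have "infdist x0 Y \<le> dist x0 (- (1 / t) *\<^sub>R y)" by (rule infdist_le)
  also have "\<dots> = norm (y + t *\<^sub>R x0) / \<bar>t\<bar>"
  proof -
    have "x0 - (- (1 / t) *\<^sub>R y) = (1 / t) *\<^sub>R (y + t *\<^sub>R x0)"
      using False by (simp add: algebra_simps)
    then show ?thesis by (simp add: dist_norm)
  qed
  finally show ?thesis using False by (simp add: field_simps)
qed simp

lemma bounded_c0_functional_coordinate:
  assumes "subspace Y" and "closed Y" and "x0 \<notin> Y"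
    and \<phi>: "\<And>y t. y \<in> Y \<Longrightarrow> \<phi> (y + t *\<^sub>R x0) = t"
    and split: "\<And>x. x \<in> c0 \<Longrightarrow> \<exists>y\<in>Y. x = y + \<phi> x *\<^sub>R x0"
  shows "bounded_c0_functional \<phi> (1 / infdist x0 Y)"
proof
  fix x z assume "x \<in> c0" "z \<in> c0"
  then obtain y1 y2 where "y1 \<in> Y" "y2 \<in> Y"
    and x: "x = y1 + \<phi> x *\<^sub>R x0" and z: "z = y2 + \<phi> z *\<^sub>R x0"
    using split by blast
  from x z have "x + z = (y1 + \<phi> x *\<^sub>R x0) + (y2 + \<phi> z *\<^sub>R x0)"
    by (rule arg_cong2[where f = "(+)"])
  then have "x + z = (y1 + y2) + (\<phi> x + \<phi> z) *\<^sub>R x0" by (simp add: algebra_simps)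
  then show "\<phi> (x + z) = \<phi> x + \<phi> z"
    using \<phi> \<open>y1 \<in> Y\<close> \<open>y2 \<in> Y\<close> \<open>subspace Y\<close> by (simp add: subspace_add)
next
  fix x c assume "x \<in> c0"
  then obtain y where "y \<in> Y" and x: "x = y + \<phi> x *\<^sub>R x0" using split by blast
  from x have "c *\<^sub>R x = c *\<^sub>R (y + \<phi> x *\<^sub>R x0)" by (rule arg_cong)
  then have "c *\<^sub>R x = c *\<^sub>R y + (c * \<phi> x) *\<^sub>R x0" by (simp add: algebra_simps)
  then show "\<phi> (c *\<^sub>R x) = c * \<phi> x"
    using \<phi> \<open>y \<in> Y\<close> \<open>subspace Y\<close> by (simp add: subspace_scale)
next
  fix x assume "x \<in> c0"
  have "infdist x0 Y > 0"
    using assms(1-3) by (auto intro: infdist_pos_not_in_closed simp: subspace_def)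
  moreover obtain y where "y \<in> Y" "x = y + \<phi> x *\<^sub>R x0" using split \<open>x \<in> c0\<close> by blast
  then have "\<bar>\<phi> x\<bar> * infdist x0 Y \<le> norm x"
    using abs_mult_infdist_le_norm[OF \<open>subspace Y\<close>] by metis
  ultimately show "\<bar>\<phi> x\<bar> \<le> 1 / infdist x0 Y * norm x" by (simp add: field_simps)
qed

lemma hyperplane_c0_eq_kernel:
  assumes "hyperplane_c0 Y"
  obtains a where "a \<in> l1" "a \<noteq> (\<lambda>n. 0)" "Y = {x \<in> c0. pairing a x = 0}"
proof -
  obtain x0 where "Y \<subseteq> c0" "subspace Y" "closed Y" "Y \<noteq> c0" "x0 \<in> c0"
    and decomp: "\<And>x. x \<in> c0 \<Longrightarrow> \<exists>y\<in>Y. \<exists>t. x = y + t *\<^sub>R x0"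
    using assms unfolding hyperplane_c0_def by blast
  have "x0 \<notin> Y"
  proof
    assume "x0 \<in> Y"
    then have "c0 \<subseteq> Y"
      using decomp \<open>subspace Y\<close> by (fastforce simp: subspace_add subspace_scale)
    then show False using \<open>Y \<subseteq> c0\<close> \<open>Y \<noteq> c0\<close> by blast
  qed
  obtain \<phi> where \<phi>: "\<And>y t. y \<in> Y \<Longrightarrow> \<phi> (y + t *\<^sub>R x0) = t"
    using subspace_coordinate_functional[OF \<open>subspace Y\<close> \<open>x0 \<notin> Y\<close>] by blast
  have split: "\<exists>y\<in>Y. x = y + \<phi> x *\<^sub>R x0" if "x \<in> c0" for x
    using decomp[OF that] \<phi> by auto
  interpret bounded_c0_functional \<phi> "1 / infdist x0 Y"
    using \<open>subspace Y\<close> \<open>closed Y\<close> \<open>x0 \<notin> Y\<close> \<phi> split by (rule bounded_c0_functional_coordinate)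
  have kernel: "Y = {x \<in> c0. pairing coeffs x = 0}"
  proof (intro set_eqI iffI)
    fix x assume "x \<in> Y"
    then show "x \<in> {x \<in> c0. pairing coeffs x = 0}"
      using \<phi>[of x 0] \<open>Y \<subseteq> c0\<close> eq_pairing by auto
  next
    fix x assume "x \<in> {x \<in> c0. pairing coeffs x = 0}"
    then show "x \<in> Y" using split eq_pairing by force
  qed
  moreover have "coeffs \<noteq> (\<lambda>n. 0)"
    using kernel \<open>Y \<noteq> c0\<close> by (auto simp: pairing_def)
  ultimately show ?thesis using that coeffs_l1 by blast
qed

section \<open>Coordinate hyperplanes\<close>

definition coordinate_hyperplane :: "nat \<Rightarrow> (nat \<Rightarrow>\<^sub>C real) set" where
  "coordinate_hyperplane k = {x \<in> c0. apply_bcontfun x k = 0}"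

lemma kernel_single_support_eq:
  assumes "a k \<noteq> 0" and "\<And>n. n \<noteq> k \<Longrightarrow> a n = 0"
  shows "{x \<in> c0. pairing a x = 0} = coordinate_hyperplane k"
  unfolding coordinate_hyperplane_def using assms pairing_single_support[OF assms(2)] by auto

lemma continuous_on_apply_bcontfun_at: "continuous_on UNIV (\<lambda>x :: nat \<Rightarrow>\<^sub>C real. apply_bcontfun x n)"
  by (rule lipschitz_on_continuous_on[of 1]) (auto intro!: lipschitz_onI dist_bounded)

lemma M_summand_coordinate_hyperplane: "M_summand_c0 (coordinate_hyperplane k)"
  unfolding M_summand_c0_def
proof (intro exI conjI)
  define W where "W = {x :: nat \<Rightarrow>\<^sub>C real. \<forall>n. n \<noteq> k \<longrightarrow> apply_bcontfun x n = 0}"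
  let ?Y = "coordinate_hyperplane k"
  show "W \<subseteq> c0" unfolding W_def by (auto intro!: c0_of_eventually_zero[of "Suc k"])
  show "subspace W" unfolding W_def subspace_def by auto
  have "W = (\<Inter>n\<in>-{k}. {x. apply_bcontfun x n = 0})" unfolding W_def by auto
  then show "closed W"
    by (auto intro!: closed_INT closed_Collect_eq continuous_on_apply_bcontfun_at)
  show "?Y \<inter> W = {0}"
    unfolding W_def coordinate_hyperplane_def
    by (auto intro!: bcontfun_eqI subspace_0[OF subspace_c0] split: if_splits)
  show "{y + w |y w. y \<in> ?Y \<and> w \<in> W} = c0"
  proof (intro set_eqI iffI)
    fix x assume "x \<in> {y + w |y w. y \<in> ?Y \<and> w \<in> W}"
    then show "x \<in> c0"
      using \<open>W \<subseteq> c0\<close> subspace_add[OF subspace_c0] unfolding coordinate_hyperplane_def by auto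
  next
    fix x assume "x \<in> c0"
    define w where "w = apply_bcontfun x k *\<^sub>R unit_seq k"
    have "x - w \<in> ?Y"
      unfolding coordinate_hyperplane_def w_def
      using \<open>x \<in> c0\<close> by (simp add: subspace_diff subspace_scale subspace_c0 unit_seq_c0)
    moreover have "w \<in> W" unfolding W_def w_def by simp
    moreover have "x = (x - w) + w" by simp
    ultimately show "x \<in> {y + w |y w. y \<in> ?Y \<and> w \<in> W}" by blast
  qed
  show "\<forall>y\<in>?Y. \<forall>w\<in>W. norm (y + w) = max (norm y) (norm w)"
  proof (intro ballI norm_eq_max_of_pointwise)
    fix y w n assume "y \<in> ?Y" "w \<in> W"
    then show "\<bar>apply_bcontfun (y + w) n\<bar> = max \<bar>apply_bcontfun y n\<bar> \<bar>apply_bcontfun w n\<bar>"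
      unfolding W_def coordinate_hyperplane_def by (cases "n = k") auto
  qed
qed

lemma annihilator_coordinate_hyperplane:
  "annihilator (coordinate_hyperplane k) = {b \<in> l1. \<forall>n. n \<noteq> k \<longrightarrow> b n = 0}"
proof (intro set_eqI iffI)
  fix b assume b: "b \<in> annihilator (coordinate_hyperplane k)"
  have "b n = 0" if "n \<noteq> k" for n
  proof -
    have "unit_seq n \<in> coordinate_hyperplane k"
      unfolding coordinate_hyperplane_def using that unit_seq_c0 by simp
    then have "pairing b (unit_seq n) = 0" using b unfolding annihilator_def by blast
    then show ?thesis by simp
  qed
  then show "b \<in> {b \<in> l1. \<forall>n. n \<noteq> k \<longrightarrow> b n = 0}"
    using b unfolding annihilator_def by simp
next
  fix b assume "b \<in> {b \<in> l1. \<forall>n. n \<noteq> k \<longrightarrow> b n = 0}"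
  then show "b \<in> annihilator (coordinate_hyperplane k)"
    unfolding annihilator_def coordinate_hyperplane_def
    using pairing_single_support[of k b] by simp
qed

lemma norm_one_projection_coordinate:
  "norm_one_projection_onto (\<lambda>b. (\<lambda>_. 0)(k := b k)) {b \<in> l1. \<forall>n. n \<noteq> k \<longrightarrow> b n = 0}"
proof -
  define P where "P b = (\<lambda>_. 0)(k := b k)" for b :: "nat \<Rightarrow> real"
  let ?R = "{b \<in> l1. \<forall>n. n \<noteq> k \<longrightarrow> b n = 0}"
  have range: "P ` l1 = ?R"
  proof (intro set_eqI iffI)
    fix b assume "b \<in> ?R"
    then have "b = P b" unfolding P_def by auto
    then show "b \<in> P ` l1" using \<open>b \<in> ?R\<close> by blast
  qed (auto simp: P_def l1_single)
  let ?S = "(\<lambda>b. norm1 (P b)) ` {b \<in> l1. norm1 b \<le> 1}"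
  have norm1_P: "norm1 (P b) = \<bar>b k\<bar>" for b
    unfolding P_def by (rule norm1_single)
  have one: "1 \<in> ?S"
  proof
    show "1 = norm1 (P ((\<lambda>_. 0)(k := 1)))" by (simp add: norm1_P)
  qed (simp add: l1_single norm1_single)
  have le_one: "s \<le> 1" if s: "s \<in> ?S" for s
  proof -
    obtain b where "b \<in> l1" "norm1 b \<le> 1" "s = \<bar>b k\<bar>" using s norm1_P by auto
    then show ?thesis using abs_le_norm1[of b k] by linarith
  qed
  have "norm_one_projection_onto P ?R"
    unfolding norm_one_projection_onto_def range
  proof (intro conjI ballI allI)
    show "bdd_above ?S" using le_one by (rule bdd_aboveI)
    show "Sup ?S = 1" using one le_one by (rule cSup_eq_maximum)
  qed (simp_all add: P_def fun_eq_iff)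
  then show ?thesis unfolding P_def .
qed

lemma property_HB_coordinate_hyperplane: "property_HB_c0 (coordinate_hyperplane k)"
proof -
  define P where "P b = (\<lambda>_. 0)(k := b k)" for b :: "nat \<Rightarrow> real"
  let ?R = "{b \<in> l1. \<forall>n. n \<noteq> k \<longrightarrow> b n = 0}"
  have "norm1 (\<lambda>n. g n + z n) > norm1 g \<and> norm1 (\<lambda>n. g n + z n) \<ge> norm1 z"
    if g: "g \<in> (\<lambda>b n. b n - P b n) ` l1" and z: "z \<in> ?R" "z \<noteq> (\<lambda>n. 0)" for g z
  proof -
    obtain b where "b \<in> l1" and g: "g = (\<lambda>n. b n - P b n)" using g by blast
    have "g \<in> l1" unfolding g P_def by (intro l1_diff \<open>b \<in> l1\<close> l1_single)
    have "g k = 0" unfolding g P_def by simp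
    have "z k \<noteq> 0" using z by auto
    have "(\<lambda>n. g n + z n) = g(k := z k)" using \<open>g k = 0\<close> z(1) by auto
    then have "norm1 (\<lambda>n. g n + z n) = norm1 g + \<bar>z k\<bar>"
      using norm1_upd[OF \<open>g \<in> l1\<close>] \<open>g k = 0\<close> by simp
    moreover have "z = (\<lambda>_. 0)(k := z k)" using z(1) by auto
    then have "norm1 z = \<bar>z k\<bar>" using norm1_single[of k "z k"] by simp
    ultimately show ?thesis using \<open>z k \<noteq> 0\<close> norm1_nonneg[OF \<open>g \<in> l1\<close>] by simp
  qed
  then show ?thesis
    using norm_one_projection_coordinate[of k, folded P_def]
    unfolding property_HB_c0_def annihilator_coordinate_hyperplane Let_def by blast
qed

section \<open>Kernels of functionals with two nonzero coordinates\<close>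

lemma annihilator_kernel:
  assumes a: "a \<in> l1" and "a k \<noteq> 0"
  shows "annihilator {x \<in> c0. pairing a x = 0} = range (\<lambda>c n. c * a n)"
proof (intro set_eqI iffI)
  fix b assume b: "b \<in> annihilator {x \<in> c0. pairing a x = 0}"
  have "b n = (b k / a k) * a n" for n
  proof -
    define y where "y = unit_seq n - (a n / a k) *\<^sub>R unit_seq k"
    have "y \<in> c0"
      unfolding y_def by (intro subspace_diff subspace_scale subspace_c0 unit_seq_c0)
    moreover have "pairing a y = 0"
      unfolding y_def using \<open>a k \<noteq> 0\<close> by (simp add: linear_diff linear_scale linear_pairing[OF a])
    ultimately have "pairing b y = 0" using b unfolding annihilator_def by blast
    moreover have "b \<in> l1" using b unfolding annihilator_def by blast
    ultimately show ?thesis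
      unfolding y_def using \<open>a k \<noteq> 0\<close>
      by (simp add: linear_diff linear_scale linear_pairing field_simps)
  qed
  then show "b \<in> range (\<lambda>c n. c * a n)" by blast
next
  fix b assume "b \<in> range (\<lambda>c n. c * a n)"
  then obtain c where "b = (\<lambda>n. c * a n)" by blast
  moreover have "pairing (\<lambda>n. c * a n) x = c * pairing a x" for x
    unfolding pairing_def by (simp add: mult.assoc suminf_mult summable_mult_apply[OF a])
  ultimately show "b \<in> annihilator {x \<in> c0. pairing a x = 0}"
    unfolding annihilator_def using l1_scale[OF a] by auto
qed

lemma norm_one_projection_fixes:
  assumes "norm_one_projection_onto P R" and "r \<in> R"
  shows "P r = r"
proof -
  obtain b where "b \<in> l1" "r = P b"
    using assms unfolding norm_one_projection_onto_def by blast
  then show ?thesis using assms(1) unfolding norm_one_projection_onto_def by metis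
qed

lemma norm_one_projection_norm1_le:
  assumes P: "norm_one_projection_onto P R" and "R \<subseteq> l1" and b: "b \<in> l1"
  shows "norm1 (P b) \<le> norm1 b"
proof (cases "norm1 b = 0")
  case True
  then have "b = (\<lambda>n. 0 * b n)"
    using suminf_eq_zero_iff[OF l1_summable[OF b]] unfolding norm1_def by auto
  then have "P b = (\<lambda>n. 0 * P b n)"
    using P b unfolding norm_one_projection_onto_def by metis
  then show ?thesis using norm1_nonneg[OF b] by (simp add: norm1_def)
next
  case False
  define s where "s = norm1 b"
  define c where "c = (\<lambda>n. (1 / s) * b n)"
  have "s > 0" using False norm1_nonneg[OF b] unfolding s_def by simp
  have "norm1 c = 1"
    unfolding c_def using norm1_scale[OF b, of "1 / s"] \<open>s > 0\<close> by (simp add: s_def)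
  moreover have "c \<in> l1" unfolding c_def by (rule l1_scale[OF b])
  ultimately have "norm1 (P c) \<in> (\<lambda>a. norm1 (P a)) ` {a \<in> l1. norm1 a \<le> 1}" by simp
  then have "norm1 (P c) \<le> 1"
    using P cSup_upper unfolding norm_one_projection_onto_def by metis
  moreover have "P c = (\<lambda>n. (1 / s) * P b n)"
    using P b unfolding norm_one_projection_onto_def c_def by blast
  then have "norm1 (P c) = norm1 (P b) / s"
    using norm1_scale[of "P b" "1 / s"] P b \<open>R \<subseteq> l1\<close> \<open>s > 0\<close>
    unfolding norm_one_projection_onto_def by auto
  ultimately show ?thesis using \<open>s > 0\<close> by (simp add: s_def field_simps)
qed

lemma abs_le_norm1_single_minus_multiple:
  assumes a: "a \<in> l1" and small: "2 * \<bar>a i\<bar> \<le> norm1 a"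
  shows "\<bar>a i\<bar> \<le> norm1 (\<lambda>n. (if n = i then a i else 0) - t * a n)"
proof -
  have "(\<lambda>n. (if n = i then a i else 0) - t * a n) = (\<lambda>n. (- t) * a n)(i := (1 - t) * a i)"
    by (auto simp: algebra_simps)
  then have "norm1 (\<lambda>n. (if n = i then a i else 0) - t * a n)
      = norm1 (\<lambda>n. (- t) * a n) - \<bar>(- t) * a i\<bar> + \<bar>(1 - t) * a i\<bar>"
    using norm1_upd[OF l1_scale[OF a]] by presburger
  also have "\<dots> = \<bar>t\<bar> * norm1 a - \<bar>t\<bar> * \<bar>a i\<bar> + \<bar>1 - t\<bar> * \<bar>a i\<bar>"
    using norm1_scale[OF a, of "- t"] by (simp add: abs_mult)
  also have "\<dots> \<ge> (\<bar>t\<bar> + \<bar>1 - t\<bar>) * \<bar>a i\<bar>"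
    using mult_left_mono[OF small, of "\<bar>t\<bar>"] by (simp add: algebra_simps)
  moreover have "(\<bar>t\<bar> + \<bar>1 - t\<bar>) * \<bar>a i\<bar> \<ge> \<bar>a i\<bar>"
    using mult_right_mono[of 1 "\<bar>t\<bar> + \<bar>1 - t\<bar>" "\<bar>a i\<bar>"] by simp
  ultimately show ?thesis by linarith
qed

lemma kernel_not_property_HB:
  assumes a: "a \<in> l1" and "j \<noteq> k" "a j \<noteq> 0" "a k \<noteq> 0"
  shows "\<not> property_HB_c0 {x \<in> c0. pairing a x = 0}"
proof
  let ?Y = "{x \<in> c0. pairing a x = 0}"
  assume "property_HB_c0 ?Y"
  then obtain P where P: "norm_one_projection_onto P (range (\<lambda>c n. c * a n))"
    and strict: "\<And>g z. g \<in> (\<lambda>b n. b n - P b n) ` l1 \<Longrightarrow> z \<in> range (\<lambda>c n. c * a n) \<Longrightarrow>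
      z \<noteq> (\<lambda>n. 0) \<Longrightarrow> norm1 (\<lambda>n. g n + z n) > norm1 g"
    unfolding property_HB_c0_def Let_def annihilator_kernel[OF a \<open>a k \<noteq> 0\<close>] by blast
  have range_l1: "range (\<lambda>c n. c * a n) \<subseteq> l1" using l1_scale[OF a] by blast
  obtain i where "a i \<noteq> 0" and small: "2 * \<bar>a i\<bar> \<le> norm1 a"
    using abs_add_abs_le_norm1[OF a \<open>j \<noteq> k\<close>] \<open>a j \<noteq> 0\<close> \<open>a k \<noteq> 0\<close>
    by (cases "\<bar>a j\<bar> \<le> \<bar>a k\<bar>") auto
  define b where "b n = (if n = i then a i else 0)" for n
  have b_single: "b = (\<lambda>_. 0)(i := a i)" unfolding b_def by auto
  have rest: "(\<lambda>n. a n - b n) = a(i := 0)" unfolding b_def by auto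
  have "b \<in> l1" unfolding b_single by (rule l1_single)
  have "(\<lambda>n. a n - b n) \<in> l1" unfolding rest by (rule l1_upd[OF a])
  have "a = (\<lambda>n. 1 * a n)" by simp
  then have "P a = a" by (intro norm_one_projection_fixes[OF P]) blast
  obtain t where Pb: "P b = (\<lambda>n. t * a n)"
    using P \<open>b \<in> l1\<close> unfolding norm_one_projection_onto_def by blast
  have P_add: "P (\<lambda>n. c n + d n) = (\<lambda>n. P c n + P d n)" if "c \<in> l1" "d \<in> l1" for c d
    using P that unfolding norm_one_projection_onto_def by blast
  have "P a = (\<lambda>n. P b n + P (\<lambda>n. a n - b n) n)"
    using P_add[OF \<open>b \<in> l1\<close> \<open>(\<lambda>n. a n - b n) \<in> l1\<close>] by simp
  then have "P (\<lambda>n. a n - b n) = (\<lambda>n. (1 - t) * a n)"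
    unfolding \<open>P a = a\<close> Pb by (auto simp: fun_eq_iff algebra_simps)
  then have "\<bar>1 - t\<bar> * norm1 a \<le> norm1 a - \<bar>a i\<bar>"
    using norm_one_projection_norm1_le[OF P range_l1 \<open>(\<lambda>n. a n - b n) \<in> l1\<close>]
    by (simp add: rest norm1_upd norm1_scale a)
  then have "t \<noteq> 0" using \<open>a i \<noteq> 0\<close> by auto
  have "norm1 (\<lambda>n. b n - t * a n) < norm1 b"
  proof -
    have "norm1 (\<lambda>n. (b n - P b n) + t * a n) > norm1 (\<lambda>n. b n - P b n)"
      using strict \<open>b \<in> l1\<close> \<open>t \<noteq> 0\<close> \<open>a i \<noteq> 0\<close> by (force simp: fun_eq_iff)
    then show ?thesis by (simp add: Pb)
  qed
  moreover have "\<bar>a i\<bar> \<le> norm1 (\<lambda>n. b n - t * a n)"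
    unfolding b_def by (rule abs_le_norm1_single_minus_multiple[OF a small])
  moreover have "norm1 b = \<bar>a i\<bar>" unfolding b_single by (rule norm1_single)
  ultimately show False by simp
qed

lemma M_summand_kernel_complement:
  assumes a: "a \<in> l1" and "a k \<noteq> 0" and M: "M_summand_c0 {x \<in> c0. pairing a x = 0}"
  obtains w where "w \<in> c0" "pairing a w = 1"
    "\<And>x. x \<in> c0 \<Longrightarrow> norm x = max (norm (x - pairing a x *\<^sub>R w)) (\<bar>pairing a x\<bar> * norm w)"
proof -
  let ?Y = "{x \<in> c0. pairing a x = 0}"
  obtain W where "W \<subseteq> c0" "subspace W" and sum: "{y + w |y w. y \<in> ?Y \<and> w \<in> W} = c0"
    and max: "\<forall>y\<in>?Y. \<forall>w\<in>W. norm (y + w) = max (norm y) (norm w)"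
    using M unfolding M_summand_c0_def by (elim exE conjE)
  obtain y w0 where "y \<in> ?Y" "w0 \<in> W" "unit_seq k = y + w0"
    using sum unit_seq_c0[of k] by blast
  then have "pairing a w0 = a k"
    using pairing_unit_seq[of a k] linear_add[OF linear_pairing[OF a], of y w0] by simp
  define w where "w = (1 / a k) *\<^sub>R w0"
  have "w \<in> W" unfolding w_def using \<open>w0 \<in> W\<close> \<open>subspace W\<close> by (rule subspace_scale[rotated])
  have "pairing a w = 1"
    unfolding w_def using \<open>pairing a w0 = a k\<close> \<open>a k \<noteq> 0\<close> by (simp add: linear_scale linear_pairing[OF a])
  moreover have "norm x = max (norm (x - pairing a x *\<^sub>R w)) (\<bar>pairing a x\<bar> * norm w)" if "x \<in> c0" for x
  proof -
    have "pairing a x *\<^sub>R w \<in> W" using \<open>w \<in> W\<close> \<open>subspace W\<close> by (rule subspace_scale[rotated])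
    moreover have "x - pairing a x *\<^sub>R w \<in> ?Y"
      using that \<open>pairing a w = 1\<close> \<open>W \<subseteq> c0\<close> calculation
      by (auto simp: subspace_diff[OF subspace_c0] linear_diff linear_scale linear_pairing[OF a])
    ultimately show ?thesis using max by fastforce
  qed
  ultimately show ?thesis using \<open>w \<in> W\<close> \<open>W \<subseteq> c0\<close> by (intro that) auto
qed

lemma norm1_mult_norm_eq_one:
  assumes a: "a \<in> l1" and "pairing a w = 1"
    and bound: "\<And>x. x \<in> c0 \<Longrightarrow> \<bar>pairing a x\<bar> * norm w \<le> norm x"
  shows "norm1 a * norm w = 1"
proof -
  have "norm w > 0" using \<open>pairing a w = 1\<close> by (auto simp: pairing_def)
  interpret bounded_c0_functional "pairing a" "1 / norm w"
  proof
    fix x assume "x \<in> c0"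
    then show "\<bar>pairing a x\<bar> \<le> 1 / norm w * norm x"
      using bound \<open>norm w > 0\<close> by (simp add: field_simps)
  qed (simp_all add: linear_add linear_scale linear_pairing[OF a])
  have "coeffs = a" by (simp add: coeffs_def fun_eq_iff)
  then have "norm1 a * norm w \<le> 1"
    using norm1_coeffs_le \<open>norm w > 0\<close> by (simp add: field_simps)
  moreover have "1 \<le> norm1 a * norm w"
    using abs_pairing_le[OF a, of w] \<open>pairing a w = 1\<close> by simp
  ultimately show ?thesis by simp
qed

lemma norm_unit_minus_multiple_le:
  assumes "apply_bcontfun w k = \<sigma> * norm w" and "\<bar>\<sigma>\<bar> = 1" and "0 \<le> c" and "c * norm w \<le> 1"
  shows "norm (\<sigma> *\<^sub>R unit_seq k - c *\<^sub>R w) \<le> max (1 - c * norm w) (c * norm w)"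
proof (rule norm_le_of_abs_apply_le)
  fix n
  show "\<bar>apply_bcontfun (\<sigma> *\<^sub>R unit_seq k - c *\<^sub>R w) n\<bar> \<le> max (1 - c * norm w) (c * norm w)"
  proof (cases "n = k")
    case True
    then have "apply_bcontfun (\<sigma> *\<^sub>R unit_seq k - c *\<^sub>R w) n = \<sigma> * (1 - c * norm w)"
      using assms(1) by (simp add: algebra_simps)
    then show ?thesis using assms(2,4) by (simp add: abs_mult)
  next
    case False
    then have "\<bar>apply_bcontfun (\<sigma> *\<^sub>R unit_seq k - c *\<^sub>R w) n\<bar> = c * \<bar>apply_bcontfun w n\<bar>"
      using \<open>0 \<le> c\<close> by (simp add: abs_mult)
    also have "\<dots> \<le> c * norm w"
      using \<open>0 \<le> c\<close> by (intro mult_left_mono abs_apply_le_norm)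
    finally show ?thesis by simp
  qed
qed

lemma kernel_not_M_summand:
  assumes a: "a \<in> l1" and "j \<noteq> k" "a j \<noteq> 0" "a k \<noteq> 0"
  shows "\<not> M_summand_c0 {x \<in> c0. pairing a x = 0}"
proof
  assume "M_summand_c0 {x \<in> c0. pairing a x = 0}"
  then obtain w where "w \<in> c0" "pairing a w = 1"
    and max: "\<And>x. x \<in> c0 \<Longrightarrow> norm x = max (norm (x - pairing a x *\<^sub>R w)) (\<bar>pairing a x\<bar> * norm w)"
    using M_summand_kernel_complement[OF a \<open>a k \<noteq> 0\<close>] by blast
  define M where "M = norm w"
  have "norm1 a * M = 1"
    unfolding M_def using a \<open>pairing a w = 1\<close>
    by (rule norm1_mult_norm_eq_one) (metis max max.cobounded2)
  then have "a k * apply_bcontfun w k = \<bar>a k\<bar> * M"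
    using pairing_eq_norm1_mult_norm_imp[OF a] \<open>pairing a w = 1\<close> unfolding M_def by simp
  then have "a k * apply_bcontfun w k = a k * (sgn (a k) * M)"
    by (simp add: abs_sgn mult.assoc)
  then have w_k: "apply_bcontfun w k = sgn (a k) * M"
    using \<open>a k \<noteq> 0\<close> by simp
  have "M > 0" unfolding M_def using \<open>pairing a w = 1\<close> by (auto simp: pairing_def)
  have "(\<bar>a j\<bar> + \<bar>a k\<bar>) * M \<le> norm1 a * M"
    using abs_add_abs_le_norm1[OF a \<open>j \<noteq> k\<close>] \<open>M > 0\<close> by (simp add: mult_right_mono)
  moreover have "\<bar>a j\<bar> * M > 0" "\<bar>a k\<bar> * M > 0"
    using \<open>a j \<noteq> 0\<close> \<open>a k \<noteq> 0\<close> \<open>M > 0\<close> by simp_all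
  ultimately have "\<bar>a k\<bar> * M < 1" "0 < \<bar>a k\<bar> * M"
    using \<open>norm1 a * M = 1\<close> by (simp_all add: distrib_right)
  define x where "x = sgn (a k) *\<^sub>R unit_seq k"
  have "x \<in> c0" unfolding x_def by (intro subspace_scale subspace_c0 unit_seq_c0)
  have "pairing a x = \<bar>a k\<bar>"
    unfolding x_def by (simp add: linear_scale linear_pairing[OF a] sgn_real_def)
  have "1 \<le> norm x"
    using abs_apply_le_norm[of x k] \<open>a k \<noteq> 0\<close> by (simp add: x_def abs_sgn_eq)
  moreover have "norm (x - \<bar>a k\<bar> *\<^sub>R w) \<le> max (1 - \<bar>a k\<bar> * M) (\<bar>a k\<bar> * M)"
    unfolding x_def M_def using w_k \<open>a k \<noteq> 0\<close> \<open>\<bar>a k\<bar> * M < 1\<close>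
    by (intro norm_unit_minus_multiple_le) (simp_all add: M_def abs_sgn_eq)
  moreover have "norm x = max (norm (x - \<bar>a k\<bar> *\<^sub>R w)) (\<bar>a k\<bar> * M)"
    using max[OF \<open>x \<in> c0\<close>] \<open>pairing a x = \<bar>a k\<bar>\<close> unfolding M_def by simp
  ultimately show False
    using \<open>\<bar>a k\<bar> * M < 1\<close> \<open>0 < \<bar>a k\<bar> * M\<close> by (simp add: max_def split: if_splits)
qed

theorem corollary3p17:
  assumes "hyperplane_c0 Y"
  shows "property_HB_c0 Y \<longleftrightarrow> M_summand_c0 Y"
proof -
  obtain a where a: "a \<in> l1" "a \<noteq> (\<lambda>n. 0)" and Y: "Y = {x \<in> c0. pairing a x = 0}"
    using hyperplane_c0_eq_kernel[OF assms] .
  obtain k where "a k \<noteq> 0" using a(2) by auto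
  show ?thesis
  proof (cases "\<forall>n. n \<noteq> k \<longrightarrow> a n = 0")
    case True
    then have "Y = coordinate_hyperplane k"
      unfolding Y using kernel_single_support_eq[of a k] \<open>a k \<noteq> 0\<close> by blast
    then show ?thesis
      using M_summand_coordinate_hyperplane property_HB_coordinate_hyperplane by simp
  next
    case False
    then obtain j where "j \<noteq> k" "a j \<noteq> 0" by blast
    then show ?thesis
      unfolding Y using kernel_not_M_summand kernel_not_property_HB a(1) \<open>a k \<noteq> 0\<close> by blast
  qed
qed

end
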